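(* The bipartite graph $G$ has a perfect matching. Moreover, for every maximum-weight perfect matching $M^*$ of $G$, the induced allocation $X$ is a complete allocation of all real items in which every real item is given to an agent that values it positively, and $X$ is Pareto optimal.
   Context: Setting: $n$ agents, $m$ real items $\mathcal M$, restricted additive valuations: there are values $v(g)>0$ with $v_{i,g}\in\{0,v(g)\}$ and $v_i(S)=\sum_{g\in S}v_{i,g}$; every real item is valued positively by at least one agent. Let $u_1>u_2>\dots>u_t$ be the distinct values in $\{v(g):g\in\mathcal M\}$ and $\mathcal M_f=\{g:v(g)=u_f\}$. Add a set $\mathcal M_d$ of $mn-m$ dummy items valued $0$ by all agents. The bipartite graph $G$ has left side $A=\{a_g: g\in\mathcal M\cup\mathcal M_d\}$ ($mn$ vertices) and right side $B=\{b_{(i,c)}: i\in[n], c\in[m]\}$; the set $\mathcal N_c=\{b_{(i,c)}:i\in[n]\}$ is called bucket $c$. Edges: for each real $g\in\mathcal M_f$, each agent $i$ with $v_{i,g}>0$ and each $c\in[m]$, an edge $(a_g,b_{(i,c)})$ of weight $-m^{t-f}\cdot c$; for each dummy $g$ and all $i,c$, an edge $(a_g,b_{(i,c)})$ of weight $0$; no other edges. The allocation induced by a perfect matching $M$ is $X_i=\{g\in\mathcal M: a_g \text{ matched in } M \text{ to some } b_{(i,c)}\}$. An integral allocation $X$ is Pareto optimal if no integral allocation $Y$ has $v_i(Y_i)\ge v_i(X_i)$ for all $i$ with strict inequality for some $i$. *)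

theory Defs
  imports Complex_Main
begin

text \<open>Conventions: agents are 0..<n, real items are 0..<m, dummy items are m..<m*n
 (so the left side A has m*n vertices).\<close>

definition agent_util :: "(nat \<Rightarrow> nat \<Rightarrow> real) \<Rightarrow> nat \<Rightarrow> nat set \<Rightarrow> real" where
  "agent_util val i S = (\<Sum>g\<in>S. val i g)"

definition is_allocation :: "nat \<Rightarrow> nat \<Rightarrow> (nat \<Rightarrow> nat set) \<Rightarrow> bool" where
  "is_allocation n m Y \<longleftrightarrow>
     (\<forall>i<n. Y i \<subseteq> {..<m}) \<and> (\<forall>g<m. \<exists>!i. i < n \<and> g \<in> Y i)"

definition pareto_optimal :: "nat \<Rightarrow> nat \<Rightarrow> (nat \<Rightarrow> nat \<Rightarrow> real) \<Rightarrow> (nat \<Rightarrow> nat set) \<Rightarrow> bool" where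
  "pareto_optimal n m val X \<longleftrightarrow> is_allocation n m X \<and>
     \<not> (\<exists>Y. is_allocation n m Y
            \<and> (\<forall>i<n. agent_util val i (Y i) \<ge> agent_util val i (X i))
            \<and> (\<exists>i<n. agent_util val i (Y i) > agent_util val i (X i)))"

definition left_vertices :: "nat \<Rightarrow> nat \<Rightarrow> nat set" where
  "left_vertices n m = {..<m * n}"

definition right_vertices :: "nat \<Rightarrow> nat \<Rightarrow> (nat \<times> nat) set" where
  "right_vertices n m = {..<n} \<times> {1..m}"

definition graph_edges :: "nat \<Rightarrow> nat \<Rightarrow> (nat \<Rightarrow> nat \<Rightarrow> real) \<Rightarrow> (nat \<times> (nat \<times> nat)) set" where
  "graph_edges n m val =
     {(g, (i, c)). g < m \<and> i < n \<and> 1 \<le> c \<and> c \<le> m \<and> val i g > 0}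
     \<union> {(g, (i, c)). m \<le> g \<and> g < m * n \<and> i < n \<and> 1 \<le> c \<and> c \<le> m}"

text \<open>Weight of an edge. For a real item g with v g = u_f (u_1 > ... > u_t the distinct
 values), t - f equals the number of distinct item values strictly smaller than v g.\<close>
definition edge_weight :: "nat \<Rightarrow> (nat \<Rightarrow> real) \<Rightarrow> nat \<times> (nat \<times> nat) \<Rightarrow> real" where
  "edge_weight m v e = (case e of (g, (i, c)) \<Rightarrow>
     if g < m then - (real m ^ card {u \<in> v ` {..<m}. u < v g}) * real c else 0)"

definition perfect_matching ::
  "('a \<times> 'b) set \<Rightarrow> 'a set \<Rightarrow> 'b set \<Rightarrow> ('a \<times> 'b) set \<Rightarrow> bool" where
  "perfect_matching E L R M \<longleftrightarrow> M \<subseteq> E \<and>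
     (\<forall>a\<in>L. \<exists>!b. (a, b) \<in> M) \<and> (\<forall>b\<in>R. \<exists>!a. (a, b) \<in> M)"

definition max_weight_perfect_matching ::
  "('a \<times> 'b) set \<Rightarrow> 'a set \<Rightarrow> 'b set \<Rightarrow> ('a \<times> 'b \<Rightarrow> real) \<Rightarrow> ('a \<times> 'b) set \<Rightarrow> bool" where
  "max_weight_perfect_matching E L R w M \<longleftrightarrow> perfect_matching E L R M \<and>
     (\<forall>M'. perfect_matching E L R M' \<longrightarrow> (\<Sum>e\<in>M'. w e) \<le> (\<Sum>e\<in>M. w e))"

definition induced_allocation :: "nat \<Rightarrow> (nat \<times> (nat \<times> nat)) set \<Rightarrow> nat \<Rightarrow> nat set" where
  "induced_allocation m M i = {g. g < m \<and> (\<exists>c. (g, (i, c)) \<in> M)}"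

end

theory Submission
  imports Defs
begin

text \<open>Under restricted additive valuations an item contributes at most v(g) to the social
 welfare, and exactly v(g) when its owner values it. An allocation giving every item to an
 agent that values it therefore maximises welfare, and a Pareto improvement would exceed that
 maximum. In G a real item is only adjacent to agents valuing it, so every perfect matching
 induces such an allocation. A perfect matching
 exists because real item g can be sent to a valuing agent in its own bucket g + 1, and the
 dummy items fill the remaining mn - m right vertices.\<close>

definition welfare :: "nat \<Rightarrow> (nat \<Rightarrow> nat \<Rightarrow> real) \<Rightarrow> (nat \<Rightarrow> nat set) \<Rightarrow> real" where
  "welfare n val Y = (\<Sum>i<n. agent_util val i (Y i))"

lemma pareto_optimal_if_welfare_maximal:
  assumes X: "is_allocation n m X"
    and max: "\<And>Y. is_allocation n m Y \<Longrightarrow> welfare n val Y \<le> welfare n val X"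
  shows "pareto_optimal n m val X"
proof -
  have "\<not> (\<forall>i<n. agent_util val i (Y i) \<ge> agent_util val i (X i))
      \<or> \<not> (\<exists>i<n. agent_util val i (Y i) > agent_util val i (X i))"
    if Y: "is_allocation n m Y" for Y
  proof (rule ccontr)
    assume "\<not> ?thesis"
    then have "welfare n val X < welfare n val Y"
      unfolding welfare_def by (intro sum_strict_mono_ex1) auto
    with max[OF Y] show False by simp
  qed
  with X show ?thesis unfolding pareto_optimal_def by blast
qed

lemma allocation_owner_unique:
  assumes "is_allocation n m Y" "g \<in> Y j" "j < n" "i < n"
  shows "g \<in> Y i \<longleftrightarrow> i = j"
  using assms unfolding is_allocation_def by blast

lemma allocation_has_owner:
  assumes "is_allocation n m Y"
  obtains owner where "\<And>g. g < m \<Longrightarrow> owner g < n \<and> g \<in> Y (owner g)"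
proof -
  have "\<exists>i. i < n \<and> g \<in> Y i" if "g < m" for g
    using assms that unfolding is_allocation_def by (metis ex1_implies_ex)
  then have "\<forall>g. \<exists>i. g < m \<longrightarrow> i < n \<and> g \<in> Y i" by simp
  from choice[OF this] show ?thesis using that by blast
qed

lemma welfare_eq_sum_owner_values:
  assumes Y: "is_allocation n m Y"
    and owner: "\<And>g. g < m \<Longrightarrow> owner g < n \<and> g \<in> Y (owner g)"
  shows "welfare n val Y = (\<Sum>g<m. val (owner g) g)"
proof -
  have "agent_util val i (Y i) = (\<Sum>g<m. if g \<in> Y i then val i g else 0)" if "i < n" for i
  proof -
    have "Y i = {..<m} \<inter> Y i" using Y that unfolding is_allocation_def by blast
    then show ?thesis unfolding agent_util_def by (metis sum.inter_restrict finite_lessThan)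
  qed
  then have "welfare n val Y = (\<Sum>i<n. \<Sum>g<m. if g \<in> Y i then val i g else 0)"
    unfolding welfare_def by simp
  also have "\<dots> = (\<Sum>g<m. \<Sum>i<n. if g \<in> Y i then val i g else 0)"
    by (rule sum.swap)
  also have "\<dots> = (\<Sum>g<m. \<Sum>i<n. if i = owner g then val i g else 0)"
    using allocation_owner_unique[OF Y] owner by (intro sum.cong refl) auto
  also have "\<dots> = (\<Sum>g<m. val (owner g) g)"
    using owner by simp
  finally show ?thesis .
qed

lemma welfare_le_sum_values:
  fixes v :: "nat \<Rightarrow> real"
  assumes Y: "is_allocation n m Y"
    and restricted: "\<forall>i<n. \<forall>g<m. val i g = 0 \<or> val i g = v g"
    and v_nonneg: "\<forall>g<m. v g \<ge> 0"
  shows "welfare n val Y \<le> (\<Sum>g<m. v g)"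
proof -
  obtain owner where owner: "\<And>g. g < m \<Longrightarrow> owner g < n \<and> g \<in> Y (owner g)"
    using allocation_has_owner[OF Y] by blast
  have "(\<Sum>g<m. val (owner g) g) \<le> (\<Sum>g<m. v g)"
    using owner restricted v_nonneg by (intro sum_mono) force
  then show ?thesis
    using welfare_eq_sum_owner_values[OF Y owner] by simp
qed

lemma welfare_eq_sum_values_if_valued:
  fixes v :: "nat \<Rightarrow> real"
  assumes X: "is_allocation n m X"
    and restricted: "\<forall>i<n. \<forall>g<m. val i g = 0 \<or> val i g = v g"
    and valued: "\<forall>i<n. \<forall>g\<in>X i. val i g > 0"
  shows "welfare n val X = (\<Sum>g<m. v g)"
proof -
  obtain owner where owner: "\<And>g. g < m \<Longrightarrow> owner g < n \<and> g \<in> X (owner g)"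
    using allocation_has_owner[OF X] by blast
  have "(\<Sum>g<m. val (owner g) g) = (\<Sum>g<m. v g)"
    using owner restricted valued by (intro sum.cong refl) force
  then show ?thesis
    using welfare_eq_sum_owner_values[OF X owner] by simp
qed

lemma pareto_optimal_if_valued:
  fixes v :: "nat \<Rightarrow> real"
  assumes X: "is_allocation n m X"
    and valued: "\<forall>i<n. \<forall>g\<in>X i. val i g > 0"
    and restricted: "\<forall>i<n. \<forall>g<m. val i g = 0 \<or> val i g = v g"
    and v_nonneg: "\<forall>g<m. v g \<ge> 0"
  shows "pareto_optimal n m val X"
  using X welfare_le_sum_values[OF _ restricted v_nonneg]
    welfare_eq_sum_values_if_valued[OF X restricted valued]
  by (intro pareto_optimal_if_welfare_maximal) auto

lemma induced_allocation_valued: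
  assumes "M \<subseteq> graph_edges n m val" "g \<in> induced_allocation m M i"
  shows "val i g > 0"
  using assms unfolding induced_allocation_def graph_edges_def by auto

lemma real_items_within_left_vertices:
  fixes n m :: nat
  assumes "\<forall>g<m. \<exists>i<n. val i g > (0::real)"
  shows "m \<le> m * n"
proof (cases "n = 0")
  case True
  with assms have "m = 0" by (metis less_nat_zero_code neq0_conv)
  then show ?thesis by simp
qed simp

lemma induced_allocation_is_allocation:
  assumes PM: "perfect_matching (graph_edges n m val) (left_vertices n m) (right_vertices n m) M"
    and real_left: "m \<le> m * n"
  shows "is_allocation n m (induced_allocation m M)"
  unfolding is_allocation_def
proof (intro conjI allI impI)
  fix i show "induced_allocation m M i \<subseteq> {..<m}"
    unfolding induced_allocation_def by auto
next
  fix g assume g: "g < m"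
  have sub: "M \<subseteq> graph_edges n m val" using PM unfolding perfect_matching_def by blast
  have "g < m * n" using g real_left by linarith
  then have "g \<in> left_vertices n m" unfolding left_vertices_def by simp
  then obtain b where b: "(g, b) \<in> M" and b_unique: "\<And>b'. (g, b') \<in> M \<Longrightarrow> b' = b"
    using PM unfolding perfect_matching_def by metis
  obtain i c where bic: "b = (i, c)" by fastforce
  have "i < n" using sub b bic unfolding graph_edges_def by auto
  moreover have "g \<in> induced_allocation m M i"
    using b bic g unfolding induced_allocation_def by auto
  moreover have "i' = i" if "g \<in> induced_allocation m M i'" for i'
    using that b_unique bic unfolding induced_allocation_def by blast
  ultimately show "\<exists>!i. i < n \<and> g \<in> induced_allocation m M i" by blast
qed

lemma perfect_matching_graph_of_bij:
  assumes "bij_betw f L R" "\<And>a. a \<in> L \<Longrightarrow> (a, f a) \<in> E"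
  shows "perfect_matching E L R ((\<lambda>a. (a, f a)) ` L)"
  using assms unfolding perfect_matching_def bij_betw_def inj_on_def by auto

lemma perfect_matching_exists:
  assumes valued: "\<forall>g<m. \<exists>i<n. val i g > (0::real)"
  shows "\<exists>M. perfect_matching (graph_edges n m val) (left_vertices n m) (right_vertices n m) M"
proof -
  obtain owner where owner: "\<And>g. g < m \<Longrightarrow> owner g < n \<and> val (owner g) g > 0"
    using valued by metis
  define real_slot where "real_slot g = (owner g, Suc g)" for g
  define R where "R = right_vertices n m"
  define D where "D = {m..<m * n}"
  have slots_bij: "bij_betw real_slot {..<m} (real_slot ` {..<m})"
    unfolding real_slot_def by (auto simp: bij_betw_def inj_on_def)
  have slots_in_R: "real_slot ` {..<m} \<subseteq> R"
    using owner unfolding real_slot_def R_def right_vertices_def by auto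
  have "card (R - real_slot ` {..<m}) = n * m - m"
    using card_Diff_subset[OF _ slots_in_R] bij_betw_same_card[OF slots_bij]
    unfolding R_def right_vertices_def by (simp add: card_cartesian_product)
  then have "card D = card (R - real_slot ` {..<m})"
    unfolding D_def by (simp add: mult.commute)
  moreover have "finite D" "finite (R - real_slot ` {..<m})"
    unfolding D_def R_def right_vertices_def by simp_all
  ultimately obtain dummy_slot where dummy_bij: "bij_betw dummy_slot D (R - real_slot ` {..<m})"
    using finite_same_card_bij by metis
  define f where "f = (\<lambda>g. if g \<in> {..<m} then real_slot g else dummy_slot g)"
  have "bij_betw f ({..<m} \<union> D) (real_slot ` {..<m} \<union> (R - real_slot ` {..<m}))"
    unfolding f_def by (rule bij_betw_disjoint_Un[OF slots_bij dummy_bij]) (auto simp: D_def)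
  moreover have "{..<m} \<union> D = left_vertices n m"
    unfolding D_def left_vertices_def
    by (rule ivl_disj_un_one(2)[OF real_items_within_left_vertices[OF valued]])
  moreover have "real_slot ` {..<m} \<union> (R - real_slot ` {..<m}) = R"
    using slots_in_R by blast
  ultimately have f_bij: "bij_betw f (left_vertices n m) R" by simp
  have "(g, f g) \<in> graph_edges n m val" if "g \<in> left_vertices n m" for g
  proof (cases "g < m")
    case True
    then show ?thesis using owner unfolding f_def real_slot_def graph_edges_def by auto
  next
    case False
    then have "f g \<in> R" using that f_bij unfolding bij_betw_def by blast
    with False that show ?thesis
      unfolding f_def R_def right_vertices_def graph_edges_def left_vertices_def by auto
  qed
  then show ?thesis
    using perfect_matching_graph_of_bij[OF f_bij] unfolding R_def by blast
qed

theorem mainTheorem8: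
  fixes n m :: nat and v :: "nat \<Rightarrow> real" and val :: "nat \<Rightarrow> nat \<Rightarrow> real"
  assumes v_pos: "\<forall>g<m. v g > 0"
    and restricted: "\<forall>i<n. \<forall>g<m. val i g = 0 \<or> val i g = v g"
    and valued: "\<forall>g<m. \<exists>i<n. val i g > 0"
  shows "(\<exists>M. perfect_matching (graph_edges n m val) (left_vertices n m) (right_vertices n m) M)
    \<and> (\<forall>M. max_weight_perfect_matching (graph_edges n m val) (left_vertices n m)
              (right_vertices n m) (edge_weight m v) M \<longrightarrow>
           is_allocation n m (induced_allocation m M)
           \<and> (\<forall>i<n. \<forall>g\<in>induced_allocation m M i. val i g > 0)
           \<and> pareto_optimal n m val (induced_allocation m M))"
proof -
  have "is_allocation n m (induced_allocation m M)
      \<and> (\<forall>i<n. \<forall>g\<in>induced_allocation m M i. val i g > 0)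
      \<and> pareto_optimal n m val (induced_allocation m M)"
    if "max_weight_perfect_matching (graph_edges n m val) (left_vertices n m)
          (right_vertices n m) (edge_weight m v) M" for M
  proof -
    have PM: "perfect_matching (graph_edges n m val) (left_vertices n m) (right_vertices n m) M"
      using that unfolding max_weight_perfect_matching_def by blast
    have X: "is_allocation n m (induced_allocation m M)"
      using induced_allocation_is_allocation[OF PM real_items_within_left_vertices[OF valued]] .
    have X_valued: "\<forall>i<n. \<forall>g\<in>induced_allocation m M i. val i g > 0"
      using PM induced_allocation_valued unfolding perfect_matching_def by blast
    have "pareto_optimal n m val (induced_allocation m M)"
      using pareto_optimal_if_valued[OF X X_valued restricted] v_pos by (simp add: less_imp_le)
    with X X_valued show ?thesis by blast
  qed
  with perfect_matching_exists[OF valued] show ?thesis by blast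
qed

end
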